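(* Let $S \subseteq \mathbb{R}^n$ be nonempty, closed and convex, and let $F_i = f_i + g_i$, $i = 1,\dots,m$, where each $f_i \colon S \to \mathbb{R}$ is continuously differentiable (not necessarily convex) and each $g_i \colon S \to \mathbb{R}$ is convex (not necessarily differentiable). For $\ell > 0$ define \[ w_\ell(x) := \max_{y \in S} \min_{i = 1,\dots,m} \left\{ \nabla f_i(x)^\top (x - y) + g_i(x) - g_i(y) - \frac{\ell}{2}\|x - y\|^2 \right\}, \quad x\in S. \] Then $w_\ell(x) \ge 0$ for all $x \in S$. Moreover, $x \in S$ is Pareto stationary for $\min_{x \in S} F(x)$, $F = (F_1,\dots,F_m)^\top$, if and only if $w_\ell(x) = 0$.
   Context: A point $\bar x \in S$ is Pareto stationary for $\min_{x\in S}F(x)$ if $\max_{i=1,\dots,m} F_i'(\bar x; z - \bar x) \ge 0$ for all $z \in S$, where $F_i'(x;d) := \lim_{t\searrow0}(F_i(x+td)-F_i(x))/t$ is the directional derivative. *)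

theory Defs
  imports "HOL-Analysis.Analysis"
begin

text \<open>One-sided directional derivative F'(x;d) = lim_{t -> 0+} (F(x+td)-F(x))/t,
  taken in the extended reals (for a convex part the limit exists in [-inf, +inf)).\<close>
definition dir_deriv :: "('a::real_normed_vector \<Rightarrow> real) \<Rightarrow> 'a \<Rightarrow> 'a \<Rightarrow> ereal" where
  "dir_deriv F x d = Lim (at_right (0::real)) (\<lambda>t. ereal ((F (x + t *\<^sub>R d) - F x) / t))"

definition pareto_stationary ::
  "'a::real_normed_vector set \<Rightarrow> nat \<Rightarrow> (nat \<Rightarrow> 'a \<Rightarrow> real) \<Rightarrow> 'a \<Rightarrow> bool" where
  "pareto_stationary S m F x \<longleftrightarrow> x \<in> S \<and>
     (\<forall>z\<in>S. Max ((\<lambda>i. dir_deriv (F i) x (z - x)) ` {1..m}) \<ge> 0)"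

text \<open>The merit function w_ell; Df i x is the gradient of f_i at x.\<close>
definition w_merit ::
  "'a::real_inner set \<Rightarrow> nat \<Rightarrow> (nat \<Rightarrow> 'a \<Rightarrow> 'a) \<Rightarrow> (nat \<Rightarrow> 'a \<Rightarrow> real) \<Rightarrow> real \<Rightarrow> 'a \<Rightarrow> real" where
  "w_merit S m Df g l x = (SUP y\<in>S. Min ((\<lambda>i. Df i x \<bullet> (x - y) + g i x - g i y
                                        - l / 2 * (norm (x - y))\<^sup>2) ` {1..m}))"

end

theory Submission
  imports Defs
begin

text \<open>For convex g the difference quotients (g (x + t (z - x)) - g x) / t decrease as t
  decreases to 0, so the directional derivative of f i + g i at x towards z is
  Df i x \<bullet> (z - x) plus their infimum, and in particular at most
  Df i x \<bullet> (z - x) + g i z - g i x. Taking y = x gives w x \<ge> 0. If some y makes all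
  terms of w positive, every F i strictly decreases from x towards y, so x is not Pareto
  stationary. Conversely, if every F i decreases in a direction z - x, then for small t > 0
  the point x + t (z - x) makes all terms positive, because the penalty l/2 norm (x - y)^2
  is only of order t^2. The supremum defining w is a real SUP and is meaningful only because
  the terms are bounded above: a convex function on a subset of R^n is bounded below by
  A - B norm (y - c), and the quadratic penalty dominates.\<close>

text \<open>A maximal affinely independent subset of S spans a simplex with nonempty relative
  interior, on which g is bounded by its maximum over the vertices.\<close>
lemma convex_on_bounded_above_near_point:
  fixes S :: "'a::euclidean_space set"
  assumes g: "convex_on S g" and "S \<noteq> {}"
  obtains c e M where "c \<in> S" "e > 0" "cball c e \<inter> affine hull S \<subseteq> S"
    "\<And>w. w \<in> cball c e \<inter> affine hull S \<Longrightarrow> g w \<le> M"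
proof -
  obtain T where T: "T \<subseteq> S" "\<not> affine_dependent T" "affine hull S = affine hull T"
    using affine_basis_exists by blast
  have "finite T"
    using T(2) aff_independent_finite by blast
  have "T \<noteq> {}"
    using T(3) \<open>S \<noteq> {}\<close> by (metis affine_hull_eq_empty)
  define P where "P = convex hull T"
  have "P \<subseteq> S"
    unfolding P_def using T(1) g convex_on_imp_convex hull_minimal by blast
  have affP: "affine hull P = affine hull S"
    using T(3) P_def by simp
  have gP: "\<forall>w\<in>P. g w \<le> Max (g ` T)"
    unfolding P_def
  proof (rule convex_on_convex_hull_bound)
    show "convex_on (convex hull T) g"
      using convex_on_subset[OF g] \<open>P \<subseteq> S\<close> P_def by simp
    show "\<forall>w\<in>T. g w \<le> Max (g ` T)"
      using \<open>finite T\<close> by simp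
  qed
  have "rel_interior P \<noteq> {}"
    using \<open>T \<noteq> {}\<close> P_def by (simp add: rel_interior_eq_empty convex_convex_hull)
  then obtain c where "c \<in> rel_interior P"
    by blast
  then obtain e where "c \<in> P" "e > 0" "cball c e \<inter> affine hull P \<subseteq> P"
    using mem_rel_interior_cball by blast
  then show ?thesis
    using that[of c e "Max (g ` T)"] \<open>P \<subseteq> S\<close> affP gP by blast
qed

text \<open>Along the ray from y through c, the point w at distance e beyond c lies in the
  ball, and c is a convex combination of w and y.\<close>
lemma convex_on_lower_bound_from_cball:
  fixes S :: "'a::real_normed_vector set"
  assumes g: "convex_on S g" and c: "c \<in> S" and "e > 0"
    and ball: "cball c e \<inter> affine hull S \<subseteq> S"
    and bound: "\<And>w. w \<in> cball c e \<inter> affine hull S \<Longrightarrow> g w \<le> M"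
    and y: "y \<in> S"
  shows "g c - (M - g c) / e * norm (y - c) \<le> g y"
proof (cases "y = c")
  case False
  define r where "r = norm (c - y)"
  have "r > 0"
    using False r_def by simp
  define w where "w = c + (e / r) *\<^sub>R (c - y)"
  have "w = (1 + e / r) *\<^sub>R c + (- (e / r)) *\<^sub>R y"
    unfolding w_def by (simp add: algebra_simps)
  also have "\<dots> \<in> affine hull S"
    by (rule mem_affine[OF affine_affine_hull]) (use c y hull_subset[of S affine] in auto)
  finally have "w \<in> affine hull S" .
  moreover have "w \<in> cball c e"
    unfolding w_def r_def using \<open>e > 0\<close> \<open>r > 0\<close> r_def by (simp add: dist_norm)
  ultimately have w: "w \<in> S" "g w \<le> M"
    using ball bound by auto
  define lam where "lam = e / (e + r)"
  have lam: "0 < lam" "lam \<le> 1"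
    unfolding lam_def using \<open>e > 0\<close> \<open>r > 0\<close> by auto
  have one_minus_lam: "1 - lam = r / (e + r)"
    unfolding lam_def using \<open>e > 0\<close> \<open>r > 0\<close> by (simp add: field_simps)
  then have "(1 - lam) * (e / r) = lam"
    unfolding lam_def using \<open>r > 0\<close> by simp
  moreover have "(1 - lam) *\<^sub>R w + lam *\<^sub>R y = c + ((1 - lam) * (e / r) - lam) *\<^sub>R (c - y)"
    unfolding w_def by (simp add: algebra_simps)
  ultimately have "(1 - lam) *\<^sub>R w + lam *\<^sub>R y = c"
    by simp
  then have "g c \<le> (1 - lam) * g w + lam * g y"
    using convex_onD[OF g, of lam w y] lam w y by auto
  also have "\<dots> \<le> (1 - lam) * M + lam * g y"
    using w lam by (simp add: mult_left_mono)
  finally have "g c - (1 - lam) * M \<le> lam * g y"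
    by simp
  then have "(g c - (1 - lam) * M) / lam \<le> g y"
    using lam by (simp add: pos_divide_le_eq mult.commute)
  moreover have "(g c - (1 - lam) * M) / lam = g c - (M - g c) / e * r"
    unfolding one_minus_lam lam_def using \<open>e > 0\<close> \<open>r > 0\<close>
    by (simp add: divide_simps) (simp add: algebra_simps)
  ultimately show ?thesis
    by (simp add: r_def norm_minus_commute)
qed simp

lemma convex_on_lower_bound_norm:
  fixes S :: "'a::euclidean_space set"
  assumes "convex_on S g"
  obtains c A B where "B \<ge> 0" "\<And>y. y \<in> S \<Longrightarrow> A - B * norm (y - c) \<le> g y"
proof (cases "S = {}")
  case False
  then obtain c e M where "c \<in> S" "e > 0" "cball c e \<inter> affine hull S \<subseteq> S"
    and bound: "\<And>w. w \<in> cball c e \<inter> affine hull S \<Longrightarrow> g w \<le> M"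
    using convex_on_bounded_above_near_point assms by metis
  moreover have "g c \<le> M"
    using bound \<open>c \<in> S\<close> \<open>e > 0\<close> hull_subset[of S affine] by auto
  ultimately show ?thesis
    using that[of "(M - g c) / e" "g c" c] convex_on_lower_bound_from_cball[OF assms] by simp
qed (use that[of 0] in simp)

lemma convex_on_diff_quotient_mono:
  assumes g: "convex_on S g" and x: "x \<in> S" and z: "z \<in> S"
    and st: "0 < s" "s \<le> t" "t \<le> 1"
  shows "(g (x + s *\<^sub>R (z - x)) - g x) / s \<le> (g (x + t *\<^sub>R (z - x)) - g x) / t"
proof -
  have "t > 0"
    using st by simp
  have "x + t *\<^sub>R (z - x) = (1 - t) *\<^sub>R x + t *\<^sub>R z"
    by (simp add: algebra_simps)
  then have xt: "x + t *\<^sub>R (z - x) \<in> S"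
    using convexD[OF convex_on_imp_convex[OF g] x z, of "1 - t" t] st by simp
  have "x + s *\<^sub>R (z - x) = (1 - s / t) *\<^sub>R x + (s / t) *\<^sub>R (x + t *\<^sub>R (z - x))"
    using \<open>t > 0\<close> by (simp add: algebra_simps)
  then have "g (x + s *\<^sub>R (z - x)) \<le> (1 - s / t) * g x + (s / t) * g (x + t *\<^sub>R (z - x))"
    using convex_onD[OF g, of "s / t" x "x + t *\<^sub>R (z - x)"] st x xt by simp
  then have "g (x + s *\<^sub>R (z - x)) - g x \<le> (s / t) * (g (x + t *\<^sub>R (z - x)) - g x)"
    by (simp add: algebra_simps)
  then show ?thesis
    using st \<open>t > 0\<close> by (simp add: field_simps)
qed

lemma convex_on_diff_quotient_tendsto_Inf:
  assumes "convex_on S g" "x \<in> S" "z \<in> S"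
  defines "Q \<equiv> \<lambda>t. ereal ((g (x + t *\<^sub>R (z - x)) - g x) / t)"
  shows "(Q \<longlongrightarrow> Inf (Q ` {0<..1})) (at_right 0)"
proof -
  have "(Q \<longlongrightarrow> Inf (Q ` ({0<..} \<inter> {..1}))) (at 0 within ({0<..} \<inter> {..1}))"
    by (rule Lim_right_bound[where K = "-\<infinity>"])
      (use convex_on_diff_quotient_mono[OF assms(1-3)] in \<open>auto simp: Q_def\<close>)
  moreover have "at 0 within ({0<..} \<inter> {..1}) = at_right (0::real)"
    by (rule at_within_nhd[of _ "{..<1}"]) auto
  ultimately show ?thesis
    by (simp add: greaterThanAtMost_def Int_commute)
qed

lemma has_derivative_diff_quotient_at_right:
  assumes "(f has_derivative f') (at x)"
  shows "((\<lambda>t. (f (x + t *\<^sub>R v) - f x) / t) \<longlongrightarrow> f' v) (at_right 0)"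
proof -
  have "((\<lambda>t. x + t *\<^sub>R v) has_derivative (\<lambda>t. t *\<^sub>R v)) (at 0)"
    by (auto intro!: derivative_eq_intros)
  then have "((\<lambda>t. f (x + t *\<^sub>R v)) has_derivative (\<lambda>t. f' (t *\<^sub>R v))) (at 0)"
    using has_derivative_compose[of "\<lambda>t. x + t *\<^sub>R v" _ 0 UNIV f f'] assms by simp
  then have "((\<lambda>t. f (x + t *\<^sub>R v)) has_field_derivative f' v) (at 0)"
    using linear_scale[OF has_derivative_linear[OF assms]]
    by (simp add: has_field_derivative_def mult.commute[of _ "f' v"])
  then show ?thesis
    unfolding has_field_derivative_iff by (simp add: filterlim_at_split)
qed

lemma tendsto_dir_deriv_add_convex:
  assumes f: "(f has_derivative f') (at x)" and g: "convex_on S g" and x: "x \<in> S" and z: "z \<in> S"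
  shows "((\<lambda>t. ereal (f' (z - x) + (g (x + t *\<^sub>R (z - x)) - g x) / t))
           \<longlongrightarrow> dir_deriv (\<lambda>y. f y + g y) x (z - x)) (at_right 0)"
proof -
  define Q where "Q t = ereal ((g (x + t *\<^sub>R (z - x)) - g x) / t)" for t
  define L where "L = ereal (f' (z - x)) + Inf (Q ` {0<..1})"
  have Q: "(Q \<longlongrightarrow> Inf (Q ` {0<..1})) (at_right 0)"
    using convex_on_diff_quotient_tendsto_Inf[OF g x z] unfolding Q_def .
  have "((\<lambda>t. ereal ((f (x + t *\<^sub>R (z - x)) - f x) / t) + Q t) \<longlongrightarrow> L) (at_right 0)"
    unfolding L_def
    by (intro tendsto_add_ereal_general2 tendsto_ereal has_derivative_diff_quotient_at_right[OF f] Q)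
      simp
  then have "dir_deriv (\<lambda>y. f y + g y) x (z - x) = L"
    unfolding dir_deriv_def
    by (intro tendsto_Lim) (simp_all add: Q_def diff_divide_distrib add_divide_distrib algebra_simps)
  moreover have "((\<lambda>t. ereal (f' (z - x)) + Q t) \<longlongrightarrow> L) (at_right 0)"
    unfolding L_def by (intro tendsto_add_ereal_general2 tendsto_const Q) simp
  ultimately show ?thesis
    by (simp add: Q_def)
qed

lemma dir_deriv_add_convex_le:
  assumes "(f has_derivative f') (at x)" "convex_on S g" "x \<in> S" "z \<in> S"
  shows "dir_deriv (\<lambda>y. f y + g y) x (z - x) \<le> ereal (f' (z - x) + g z - g x)"
proof (rule tendsto_upperbound[OF tendsto_dir_deriv_add_convex[OF assms]])
  have "(g (x + t *\<^sub>R (z - x)) - g x) / t \<le> g z - g x" if "0 < t" "t < 1" for t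
    using convex_on_diff_quotient_mono[OF assms(2-4), of t 1] that by simp
  then show "\<forall>\<^sub>F t in at_right 0.
      ereal (f' (z - x) + (g (x + t *\<^sub>R (z - x)) - g x) / t) \<le> ereal (f' (z - x) + g z - g x)"
    unfolding eventually_at_right_field by (auto intro!: exI[of _ 1])
qed simp

definition w_merit_term ::
  "(nat \<Rightarrow> 'a::real_inner \<Rightarrow> 'a) \<Rightarrow> (nat \<Rightarrow> 'a \<Rightarrow> real) \<Rightarrow> real \<Rightarrow> 'a \<Rightarrow> 'a \<Rightarrow> nat \<Rightarrow> real" where
  "w_merit_term Df g l x y i = Df i x \<bullet> (x - y) + g i x - g i y - l / 2 * (norm (x - y))\<^sup>2"

definition w_merit_min ::
  "nat \<Rightarrow> (nat \<Rightarrow> 'a::real_inner \<Rightarrow> 'a) \<Rightarrow> (nat \<Rightarrow> 'a \<Rightarrow> real) \<Rightarrow> real \<Rightarrow> 'a \<Rightarrow> 'a \<Rightarrow> real" where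
  "w_merit_min m Df g l x y = Min (w_merit_term Df g l x y ` {1..m})"

lemma w_merit_altdef: "w_merit S m Df g l x = (SUP y\<in>S. w_merit_min m Df g l x y)"
  by (simp add: w_merit_def w_merit_min_def w_merit_term_def)

lemma w_merit_min_self: "m \<ge> 1 \<Longrightarrow> w_merit_min m Df g l x x = 0"
  by (auto simp: w_merit_min_def w_merit_term_def image_constant_conv)

lemma w_merit_min_le_term: "i \<in> {1..m} \<Longrightarrow> w_merit_min m Df g l x y \<le> w_merit_term Df g l x y i"
  by (simp add: w_merit_min_def)

lemma w_merit_min_pos_iff:
  "m \<ge> 1 \<Longrightarrow> 0 < w_merit_min m Df g l x y \<longleftrightarrow> (\<forall>i\<in>{1..m}. 0 < w_merit_term Df g l x y i)"
  by (simp add: w_merit_min_def)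

lemma w_merit_term_along_segment:
  assumes "t \<noteq> 0"
  shows "w_merit_term Df g l x (x + t *\<^sub>R v) i
    = - t * (Df i x \<bullet> v + (g i (x + t *\<^sub>R v) - g i x) / t + l / 2 * t * (norm v)\<^sup>2)"
  using assms by (simp add: w_merit_term_def field_simps power_mult_distrib power2_eq_square)

lemma bdd_above_w_merit_min:
  fixes S :: "'a::euclidean_space set"
  assumes "i \<in> {1..m}" "convex_on S (g i)" "l > 0"
  shows "bdd_above (w_merit_min m Df g l x ` S)"
proof -
  obtain c A B where "B \<ge> 0" and lb: "\<And>y. y \<in> S \<Longrightarrow> A - B * norm (y - c) \<le> g i y"
    using convex_on_lower_bound_norm assms(2) by metis
  define D where "D = norm (Df i x) + B"
  define K where "K = g i x - A + B * norm (x - c)"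
  have "w_merit_min m Df g l x y \<le> K + D\<^sup>2 / (2 * l)" if y: "y \<in> S" for y
  proof -
    define s where "s = norm (x - y)"
    have "Df i x \<bullet> (x - y) \<le> norm (Df i x) * s"
      unfolding s_def by (rule norm_cauchy_schwarz)
    moreover have "norm (y - c) \<le> s + norm (x - c)"
      unfolding s_def using norm_triangle_ineq[of "y - x" "x - c"] by (simp add: norm_minus_commute)
    then have "B * norm (y - c) \<le> B * (s + norm (x - c))"
      using \<open>B \<ge> 0\<close> by (rule mult_left_mono)
    ultimately have "w_merit_term Df g l x y i \<le> K + D * s - l / 2 * s\<^sup>2"
      using lb[OF y] unfolding w_merit_term_def K_def D_def s_def by (simp add: algebra_simps)
    also have "\<dots> = K + D\<^sup>2 / (2 * l) - (l * s - D)\<^sup>2 / (2 * l)"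
      using \<open>l > 0\<close> by (simp add: field_simps power2_eq_square)
    also have "\<dots> \<le> K + D\<^sup>2 / (2 * l)"
      using \<open>l > 0\<close> by simp
    finally show ?thesis
      using w_merit_min_le_term[OF assms(1)] order_trans by blast
  qed
  then show ?thesis
    by (rule bdd_aboveI2)
qed

lemma w_merit_nonneg:
  assumes "bdd_above (w_merit_min m Df g l x ` S)" "x \<in> S" "m \<ge> 1"
  shows "0 \<le> w_merit S m Df g l x"
  unfolding w_merit_altdef using cSUP_upper[OF assms(2,1)] w_merit_min_self[OF assms(3), of Df g l x] by simp

lemma w_merit_eq_0_iff:
  assumes "bdd_above (w_merit_min m Df g l x ` S)" "x \<in> S" "m \<ge> 1"
  shows "w_merit S m Df g l x = 0 \<longleftrightarrow> (\<forall>y\<in>S. w_merit_min m Df g l x y \<le> 0)"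
proof -
  have "w_merit S m Df g l x \<le> 0 \<longleftrightarrow> (\<forall>y\<in>S. w_merit_min m Df g l x y \<le> 0)"
    unfolding w_merit_altdef using cSUP_le_iff[OF _ assms(1)] assms(2) by blast
  then show ?thesis
    using w_merit_nonneg[OF assms] by linarith
qed

lemma pareto_stationary_imp_w_merit_min_nonpos:
  assumes ps: "pareto_stationary S m (\<lambda>i y. f i y + g i y) x" and y: "y \<in> S"
    and "m \<ge> 1" "l \<ge> 0"
    and f: "\<And>i. i \<in> {1..m} \<Longrightarrow> (f i has_derivative (\<lambda>h. Df i x \<bullet> h)) (at x)"
    and g: "\<And>i. i \<in> {1..m} \<Longrightarrow> convex_on S (g i)"
  shows "w_merit_min m Df g l x y \<le> 0"
proof (rule ccontr)
  assume "\<not> ?thesis"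
  then have pos: "\<forall>i\<in>{1..m}. 0 < w_merit_term Df g l x y i"
    using w_merit_min_pos_iff[OF \<open>m \<ge> 1\<close>, of Df g l x y] by simp
  have "dir_deriv (\<lambda>y. f i y + g i y) x (y - x) < 0" if i: "i \<in> {1..m}" for i
  proof -
    have "0 < w_merit_term Df g l x y i"
      using pos i by blast
    moreover have "0 \<le> l / 2 * (norm (x - y))\<^sup>2"
      using \<open>l \<ge> 0\<close> by simp
    ultimately have descent: "Df i x \<bullet> (y - x) + g i y - g i x < 0"
      by (simp add: w_merit_term_def inner_diff_right)
    have "x \<in> S"
      using ps by (simp add: pareto_stationary_def)
    then have "dir_deriv (\<lambda>y. f i y + g i y) x (y - x) \<le> ereal (Df i x \<bullet> (y - x) + g i y - g i x)"
      by (rule dir_deriv_add_convex_le[OF f[OF i] g[OF i] _ y])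
    also have "\<dots> < 0"
      using descent by simp
    finally show ?thesis .
  qed
  then have "Max ((\<lambda>i. dir_deriv (\<lambda>y. f i y + g i y) x (y - x)) ` {1..m}) < 0"
    using \<open>m \<ge> 1\<close> by (simp add: Max_less_iff)
  then show False
    using ps y by (simp add: pareto_stationary_def not_le[symmetric])
qed

lemma w_merit_min_nonpos_imp_pareto_stationary:
  assumes x: "x \<in> S" and "m \<ge> 1"
    and nonpos: "\<And>y. y \<in> S \<Longrightarrow> w_merit_min m Df g l x y \<le> 0"
    and f: "\<And>i. i \<in> {1..m} \<Longrightarrow> (f i has_derivative (\<lambda>h. Df i x \<bullet> h)) (at x)"
    and g: "\<And>i. i \<in> {1..m} \<Longrightarrow> convex_on S (g i)"
  shows "pareto_stationary S m (\<lambda>i y. f i y + g i y) x"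
  unfolding pareto_stationary_def
proof (intro conjI ballI x)
  fix z assume z: "z \<in> S"
  define v where "v = z - x"
  define P where "P i t = Df i x \<bullet> v + (g i (x + t *\<^sub>R v) - g i x) / t + l / 2 * t * (norm v)\<^sup>2"
    for i t
  show "0 \<le> Max ((\<lambda>i. dir_deriv (\<lambda>y. f i y + g i y) x (z - x)) ` {1..m})"
  proof (rule ccontr)
    assume "\<not> ?thesis"
    then have neg: "\<forall>i\<in>{1..m}. dir_deriv (\<lambda>y. f i y + g i y) x v < 0"
      using \<open>m \<ge> 1\<close> by (simp add: v_def not_le Max_less_iff)
    have "\<forall>\<^sub>F t in at_right 0. P i t < 0" if i: "i \<in> {1..m}" for i
    proof -
      obtain a where a: "dir_deriv (\<lambda>y. f i y + g i y) x v < ereal a" "ereal a < 0"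
        using ereal_dense2[of _ 0] neg i by blast
      have "\<forall>\<^sub>F t in at_right 0. ereal (Df i x \<bullet> v + (g i (x + t *\<^sub>R v) - g i x) / t) < ereal a"
        using order_tendstoD(2)[OF tendsto_dir_deriv_add_convex[OF f[OF i] g[OF i] x z]]
          a(1)[unfolded v_def] unfolding v_def by blast
      moreover have "((\<lambda>t. l / 2 * t * (norm v)\<^sup>2) \<longlongrightarrow> l / 2 * 0 * (norm v)\<^sup>2) (at_right (0::real))"
        by (intro tendsto_intros)
      then have "\<forall>\<^sub>F t in at_right 0. l / 2 * t * (norm v)\<^sup>2 < - a"
        using a(2) by (intro order_tendstoD(2)) auto
      ultimately show ?thesis
        unfolding P_def by eventually_elim simp
    qed
    then have "\<forall>\<^sub>F t in at_right 0. \<forall>i\<in>{1..m}. P i t < 0"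
      by (simp add: eventually_ball_finite_distrib)
    moreover have "\<forall>\<^sub>F t in at_right (0::real). t \<in> {0<..1}"
      using eventually_at_right_real[OF zero_less_one] by eventually_elim simp
    ultimately have "\<forall>\<^sub>F t in at_right 0. t \<in> {0<..1} \<and> (\<forall>i\<in>{1..m}. P i t < 0)"
      by eventually_elim simp
    then obtain t where t: "t \<in> {0<..1}" and P: "\<forall>i\<in>{1..m}. P i t < 0"
      using eventually_happens trivial_limit_at_right_real by blast
    have "convex S"
      using convex_on_imp_convex g[of 1] \<open>m \<ge> 1\<close> by simp
    moreover have "x + t *\<^sub>R v = (1 - t) *\<^sub>R x + t *\<^sub>R z"
      by (simp add: v_def algebra_simps)
    ultimately have "x + t *\<^sub>R v \<in> S"
      using convexD[of S x z "1 - t" t] x z t by simp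
    moreover have "0 < w_merit_term Df g l x (x + t *\<^sub>R v) i" if "i \<in> {1..m}" for i
      using P that t by (simp add: w_merit_term_along_segment P_def mult_pos_neg)
    then have "0 < w_merit_min m Df g l x (x + t *\<^sub>R v)"
      using w_merit_min_pos_iff[OF \<open>m \<ge> 1\<close>] by blast
    ultimately show False
      using nonpos by (simp add: not_le[symmetric])
  qed
qed

theorem theorem3p10:
  fixes S :: "(real^'n) set" and m :: nat and l :: real
    and f g :: "nat \<Rightarrow> real^'n \<Rightarrow> real" and Df :: "nat \<Rightarrow> real^'n \<Rightarrow> real^'n"
  assumes "S \<noteq> {}" and "closed S" and "convex S" and "m \<ge> 1" and "l > 0"
    and "\<forall>i\<in>{1..m}. \<forall>x\<in>S. (f i has_derivative (\<lambda>h. Df i x \<bullet> h)) (at x)"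
    and "\<forall>i\<in>{1..m}. continuous_on S (Df i)"
    and "\<forall>i\<in>{1..m}. convex_on S (g i)"
  shows "(\<forall>x\<in>S. w_merit S m Df g l x \<ge> 0) \<and>
         (\<forall>x\<in>S. pareto_stationary S m (\<lambda>i y. f i y + g i y) x \<longleftrightarrow> w_merit S m Df g l x = 0)"
proof -
  have bdd: "bdd_above (w_merit_min m Df g l x ` S)" for x
    using bdd_above_w_merit_min[of 1 m S g l Df x] assms(4,5,8) by simp
  have "pareto_stationary S m (\<lambda>i y. f i y + g i y) x \<longleftrightarrow> (\<forall>y\<in>S. w_merit_min m Df g l x y \<le> 0)"
    if "x \<in> S" for x
  proof
    show "\<forall>y\<in>S. w_merit_min m Df g l x y \<le> 0" if "pareto_stationary S m (\<lambda>i y. f i y + g i y) x"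
      using pareto_stationary_imp_w_merit_min_nonpos[OF that] assms(4,5,6,8) \<open>x \<in> S\<close> by simp
    show "pareto_stationary S m (\<lambda>i y. f i y + g i y) x" if "\<forall>y\<in>S. w_merit_min m Df g l x y \<le> 0"
      by (rule w_merit_min_nonpos_imp_pareto_stationary[OF \<open>x \<in> S\<close> assms(4)])
        (use that assms(6,8) \<open>x \<in> S\<close> in auto)
  qed
  then show ?thesis
    using w_merit_nonneg[OF bdd] w_merit_eq_0_iff[OF bdd] assms(4) by blast
qed

end
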